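(* Let $2\le k<\omega$ and let $\kappa$ be a cardinal with $\kappa\le 2^{\aleph_0}\le\kappa^{+(k-2)}$. Then there are $d$ with $1\le d<\omega$ and a $d$-dimensional $k$-template $P$ such that $\chi(L(\mathbb R^d,P))=\kappa$.
   Context: A $d$-dimensional $k$-template is a set $P$ of $d$-tuples with $|P|=k$. If $P,Q$ are $d$-dimensional templates, $Q$ is a homomorphic image of $P$ if there is a surjection $f:P\to Q$ such that for all $x,y\in P$ and $i<d$, $x_i=y_i$ implies $f(x)_i=f(y)_i$. $L(\mathbb R^d,P)$ is the $k$-hypergraph with vertex set $\mathbb R^d$ whose edges are the $k$-templates contained in $\mathbb R^d$ that are homomorphic images of $P$. $\chi$ is chromatic number (least cardinal number of colors in a vertex coloring not constant on any edge). $\kappa^+$ is the successor cardinal, $\kappa^{+0}=\kappa$, $\kappa^{+(n+1)}=(\kappa^{+n})^+$. *)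

theory Defs
  imports Complex_Main
begin

unbundle cardinal_syntax

text \<open>d-tuples of reals are represented as real lists of length d; d-tuples over an
  arbitrary type 'a as 'a lists of length d.\<close>

definition template :: "nat \<Rightarrow> nat \<Rightarrow> 'a list set \<Rightarrow> bool" where
  "template d k P \<longleftrightarrow> finite P \<and> card P = k \<and> (\<forall>x\<in>P. length x = d)"

definition hom_image :: "nat \<Rightarrow> 'a list set \<Rightarrow> 'b list set \<Rightarrow> bool" where
  "hom_image d P Q \<longleftrightarrow>
     (\<exists>f. f ` P = Q \<and>
          (\<forall>x\<in>P. \<forall>y\<in>P. \<forall>i<d. x ! i = y ! i \<longrightarrow> f x ! i = f y ! i))"

definition Rd :: "nat \<Rightarrow> real list set" where
  "Rd d = {x. length x = d}"

definition L_edges :: "nat \<Rightarrow> 'a list set \<Rightarrow> real list set set" where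
  "L_edges d P = {Q. Q \<subseteq> Rd d \<and> template d (card P) Q \<and> hom_image d P Q}"

text \<open>A vertex colouring not constant on any edge.  Colours are taken from the vertex
  type itself; this is no loss, since the image of any colouring of V injects into V.\<close>
definition proper_colouring :: "'v set \<Rightarrow> 'v set set \<Rightarrow> ('v \<Rightarrow> 'c) \<Rightarrow> bool" where
  "proper_colouring V E c \<longleftrightarrow> (\<forall>e\<in>E. \<exists>x\<in>e. \<exists>y\<in>e. c x \<noteq> c y)"

definition chromatic_number_is :: "'v set \<Rightarrow> 'v set set \<Rightarrow> 'a rel \<Rightarrow> bool" where
  "chromatic_number_is V E r \<longleftrightarrow>
     (\<exists>c :: 'v \<Rightarrow> 'v. proper_colouring V E c \<and> r =o (card_of (c ` V))) \<and>
     (\<forall>c :: 'v \<Rightarrow> 'v. proper_colouring V E c \<longrightarrow> r \<le>o (card_of (c ` V)))"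

fun succ_iter_real :: "'a rel \<Rightarrow> nat \<Rightarrow> real set \<Rightarrow> bool" where
  "succ_iter_real r 0 B \<longleftrightarrow> card_of B =o r"
| "succ_iter_real r (Suc n) B \<longleftrightarrow> (\<exists>B'. succ_iter_real r n B' \<and> card_of B =o cardSuc (card_of B'))"

text \<open>continuum_le_succ_iter r n  expresses  2^aleph_0 \<le> r^{+n}.  Since
  r^{+m} \<ge> 2^aleph_0 for some m \<le> n iff r^{+n} \<ge> 2^aleph_0, and for the least such m
  (when r \<le> 2^aleph_0) all of r, ..., r^{+m} are \<le> 2^aleph_0 and hence realised by sets of
  reals, this is an exact rendering for cardinals r \<le> 2^aleph_0.\<close>
definition continuum_le_succ_iter :: "'a rel \<Rightarrow> nat \<Rightarrow> bool" where
  "continuum_le_succ_iter r n \<longleftrightarrow>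
     (\<exists>m\<le>n. \<exists>B. succ_iter_real r m B \<and> card_of (UNIV :: real set) \<le>o card_of B)"

end

theory Submission
  imports Defs
begin

unbundle cardinal_syntax

text \<open>Let \<open>m \<le> k - 2\<close> and \<open>B \<subseteq> \<real>\<close> with \<open>|B| = \<kappa>\<^sup>+\<^sup>m \<ge> 2\<^sup>\<aleph>\<^sup>0\<close>, and put \<open>d = m + 1\<close>.
  The template is a cross in \<open>\<real>\<^sup>d\<close>: the origin, \<open>k - d\<close> further points on the first axis and a
  unit point on each other axis.  Every copy of it contains a point \<open>x\<close> together with, for each
  axis \<open>i\<close>, a second point on the parallel to the \<open>i\<close>-th axis through \<open>x\<close>.

  Upper bound: by Kuratowski's theorem \<open>\<real>\<^sup>d = G\<^sub>0 \<union> \<dots> \<union> G\<^sub>m\<close> where \<open>G\<^sub>i\<close> meets every parallel to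
  the \<open>i\<close>-th axis in at most \<open>\<kappa>\<close> points; colouring \<open>x \<in> G\<^sub>i\<close> by \<open>i\<close> and by the position of \<open>x\<close> on
  its line separates such pairs.

  Lower bound: given fewer than \<open>\<kappa>\<close> colours, let \<open>G\<^sub>i\<close> consist of the points whose colour class
  meets the parallel to the \<open>i\<close>-th axis through them in a finite set.  A point outside all
  \<open>G\<^sub>i\<close> is the centre of a monochromatic cross, so the \<open>G\<^sub>i\<close> cover \<open>B\<^sup>d\<close> while meeting every
  parallel to the \<open>i\<close>-th axis in fewer than \<open>\<kappa>\<close> points; this is impossible for \<open>|B| = \<kappa>\<^sup>+\<^sup>m\<close>
  by the converse of Kuratowski's theorem.\<close>

section \<open>Cardinal preliminaries\<close>

lemma succ_iter_real_ordIso: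
  assumes "succ_iter_real r n B" and "|B| =o |X|"
  shows "succ_iter_real r n X"
proof (cases n)
  case 0
  then show ?thesis using assms by (auto intro: ordIso_transitive ordIso_symmetric)
next
  case (Suc m)
  then obtain B' where "succ_iter_real r m B'" and "|B| =o cardSuc |B'|" using assms by auto
  moreover have "|X| =o cardSuc |B'|"
    using calculation(2) assms(2) ordIso_transitive ordIso_symmetric by blast
  ultimately show ?thesis using Suc by auto
qed

lemma succ_iter_real_ordLeq:
  assumes "Card_order r" and "succ_iter_real r n B"
  shows "r \<le>o |B|"
  using assms(2)
proof (induction n arbitrary: B)
  case 0
  then show ?case by (auto intro: ordIso_imp_ordLeq ordIso_symmetric)
next
  case (Suc n)
  then obtain B' where B': "succ_iter_real r n B'" "|B| =o cardSuc |B'|" by auto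
  have "r \<le>o |B'|" using Suc.IH B'(1) .
  also have "|B'| \<le>o cardSuc |B'|"
    using cardSuc_greater[OF card_of_Card_order] ordLess_imp_ordLeq by blast
  also have "cardSuc |B'| \<le>o |B|" using B'(2) ordIso_imp_ordLeq ordIso_symmetric by blast
  finally show ?case .
qed

lemma succ_iter_real_finite:
  assumes "Card_order r" and "finite (Field r)" and "succ_iter_real r n B"
  shows "finite B"
  using assms(3)
proof (induction n arbitrary: B)
  case 0
  then show ?case
    using assms(1,2) card_of_ordIso_finite_Field ordIso_symmetric by fastforce
next
  case (Suc n)
  then obtain B' where B': "succ_iter_real r n B'" "|B| =o cardSuc |B'|" by auto
  have "finite (Field (cardSuc |B'| ))"
    using Suc.IH[OF B'(1)] cardSuc_finite[OF card_of_Card_order[of B']]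
    unfolding Field_card_of by blast
  then show ?case
    using B'(2) card_of_ordIso_finite_Field[OF cardSuc_Card_order[OF card_of_Card_order]]
      ordIso_symmetric by blast
qed

lemma succ_iter_real_Suc_subset:
  assumes "succ_iter_real r (Suc n) B"
  obtains X where "X \<subseteq> B" and "succ_iter_real r n X" and "|X| <o |B|"
proof -
  obtain B' where B': "succ_iter_real r n B'" "|B| =o cardSuc |B'|" using assms by auto
  have lt: "|B'| <o |B|"
    using cardSuc_greater[OF card_of_Card_order[of B']] B'(2) ordLess_ordIso_trans ordIso_symmetric
    by blast
  then obtain f where f: "inj_on f B'" "f ` B' \<subseteq> B"
    using card_of_ordLeq[of B' B] ordLess_imp_ordLeq by blast
  have iso: "|B'| =o |f ` B'|" using f(1) card_of_ordIso inj_on_imp_bij_betw by blast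
  show ?thesis
  proof
    show "f ` B' \<subseteq> B" by (rule f(2))
    show "succ_iter_real r n (f ` B')" using succ_iter_real_ordIso[OF B'(1) iso] .
    show "|f ` B'| <o |B|" using iso lt ordIso_ordLess_trans ordIso_symmetric by blast
  qed
qed

lemma Card_order_ordLeq_infinite:
  assumes "Card_order \<kappa>" and "\<not> finite (Field \<kappa>)" and "\<kappa> \<le>o |B|"
  shows "\<not> finite B"
  using assms card_of_Field_ordIso card_of_ordLeq_finite ordIso_ordLeq_trans by blast

lemma finite_ordLess_infinite_Card_order:
  assumes "Card_order \<kappa>" and "\<not> finite (Field \<kappa>)" and "finite A"
  shows "|A| <o \<kappa>"
  using finite_ordLess_infinite[OF card_of_Well_order card_order_on_well_order_on[OF assms(1)]]
    assms by (simp add: Field_card_of)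

lemma card_of_UNION_finite_ordLess:
  assumes "Card_order \<kappa>" and "\<not> finite (Field \<kappa>)" and "|I| <o \<kappa>"
    and "\<forall>i\<in>I. finite (A i)"
  shows "|\<Union>i\<in>I. A i| <o \<kappa>"
proof (cases "finite I")
  case True
  then show ?thesis using assms by (intro finite_ordLess_infinite_Card_order) auto
next
  case False
  have "\<forall>i\<in>I. |A i| \<le>o |I|"
    using assms(4) False finite_ordLess_infinite[OF card_of_Well_order card_of_Well_order]
    by (metis Field_card_of ordLess_imp_ordLeq)
  then have "|\<Union>i\<in>I. A i| \<le>o |I|"
    using card_of_UNION_ordLeq_infinite[OF False] card_of_refl ordIso_imp_ordLeq by blast
  then show ?thesis using assms(3) ordLeq_ordLess_trans by blast
qed

lemma card_of_under_ordLeq_of_cardSuc: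
  assumes "|A| \<le>o cardSuc |B|" and "\<not> finite B" and "a \<in> A"
  shows "|under (card_of A) a| \<le>o |B|"
proof -
  have "|underS (card_of A) a| <o |A|"
    using card_of_underS[OF card_of_Card_order] assms(3) by (simp add: Field_card_of)
  then have "|underS (card_of A) a| <o cardSuc |B|" using assms(1) ordLess_ordLeq_trans by blast
  then have "|underS (card_of A) a| \<le>o |B|"
    using cardSuc_ordLeq_ordLess[OF card_of_Card_order card_of_Card_order] by blast
  moreover have "|{a}| \<le>o |B|" using assms(2) by (intro card_of_singl_ordLeq) auto
  moreover have "under (card_of A) a = underS (card_of A) a \<union> {a}"
    using card_of_Well_order[of A] assms(3)
    by (auto simp: under_def underS_def Field_card_of well_order_on_def linear_order_on_def
        partial_order_on_def preorder_on_def refl_on_def)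
  ultimately show ?thesis
    using card_of_Un_ordLeq_infinite_Field[of "|B|", OF _ _ _ card_of_Card_order] assms(2)
    unfolding Field_card_of by metis
qed

section \<open>Tuples and axis-parallel lines\<close>

definition tuples :: "'b set \<Rightarrow> nat \<Rightarrow> 'b list set" where
  "tuples A n = {x. length x = n \<and> set x \<subseteq> A}"

lemma Rd_eq_tuples: "Rd d = tuples UNIV d"
  by (auto simp: Rd_def tuples_def)

lemma card_of_tuples_infinite:
  assumes "\<not> finite A"
  shows "|tuples A n| \<le>o |A|"
proof (induction n)
  case 0
  have "tuples A 0 = {[]}" by (auto simp: tuples_def)
  moreover have "A \<noteq> {}" using assms by auto
  ultimately show ?case using card_of_singl_ordLeq by metis
next
  case (Suc n)
  obtain a where "a \<in> A" using assms by (metis ex_in_conv finite.emptyI)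
  then have ne: "tuples A n \<noteq> {}" by (auto simp: tuples_def intro!: exI[of _ "replicate n a"])
  have "tuples A (Suc n) \<subseteq> (\<lambda>(a, x). a # x) ` (A \<times> tuples A n)"
    by (auto simp: tuples_def length_Suc_conv)
  then have "|tuples A (Suc n)| \<le>o |A \<times> tuples A n|"
    using card_of_mono1 card_of_image ordLeq_transitive by blast
  also have "|A \<times> tuples A n| =o |A|" using card_of_Times_infinite[OF assms ne Suc] by blast
  finally show ?case using ordIso_imp_ordLeq by blast
qed

definition axis_line :: "nat \<Rightarrow> 'b list \<Rightarrow> 'b list set" where
  "axis_line i x = {y. length y = length x \<and> (\<forall>j<length x. j \<noteq> i \<longrightarrow> y ! j = x ! j)}"

lemma axis_line_self [simp]: "x \<in> axis_line i x"
  by (simp add: axis_line_def)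

lemma axis_line_eq: "y \<in> axis_line i x \<Longrightarrow> axis_line i y = axis_line i x"
  by (auto simp: axis_line_def)

lemma axis_line_Int_axis_line:
  assumes "i \<noteq> j" and "z \<in> axis_line i x" and "z \<in> axis_line j x"
  shows "z = x"
proof (rule nth_equalityI)
  show "length z = length x" using assms by (simp add: axis_line_def)
  show "z ! t = x ! t" if "t < length z" for t
    using assms that by (cases "t = i") (auto simp: axis_line_def)
qed

definition del_nth :: "nat \<Rightarrow> 'b list \<Rightarrow> 'b list" where
  "del_nth j x = take j x @ drop (Suc j) x"

definition skip_index :: "nat \<Rightarrow> nat \<Rightarrow> nat" where
  "skip_index j i = (if i < j then i else Suc i)"

lemma skip_index_inject: "skip_index j i = skip_index j i' \<longleftrightarrow> i = i'"
  by (auto simp: skip_index_def)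

lemma skip_index_neq: "skip_index j i \<noteq> j"
  by (auto simp: skip_index_def)

lemma length_del_nth: "j < length x \<Longrightarrow> length (del_nth j x) = length x - 1"
  by (auto simp: del_nth_def)

lemma nth_del_nth: "j < length x \<Longrightarrow> p < length x - 1 \<Longrightarrow> del_nth j x ! p = x ! skip_index j p"
  by (auto simp: del_nth_def skip_index_def nth_append min_def)

lemma set_del_nth_subset: "set (del_nth j x) \<subseteq> set x"
  unfolding del_nth_def using set_take_subset set_drop_subset by fastforce

lemma del_nth_inject:
  assumes "j < length y" and "length y = length y'" and "y ! j = y' ! j"
    and "del_nth j y = del_nth j y'"
  shows "y = y'"
proof -
  have "take j y = take j y'" and "drop (Suc j) y = drop (Suc j) y'"
    using assms(1,2,4) unfolding del_nth_def by (metis append_eq_append_conv length_take)+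
  then show ?thesis using assms(3) id_take_nth_drop assms(1,2) by metis
qed

lemma del_nth_axis_line:
  assumes "j < length x" and "y \<in> axis_line (skip_index j i) x"
  shows "del_nth j y \<in> axis_line i (del_nth j x)"
proof -
  have ly: "length y = length x" using assms(2) by (simp add: axis_line_def)
  have "del_nth j y ! p = del_nth j x ! p" if "p < length x - 1" and "p \<noteq> i" for p
  proof -
    have "skip_index j p < length x" using that(1) by (auto simp: skip_index_def)
    moreover have "skip_index j p \<noteq> skip_index j i" using that(2) skip_index_inject by metis
    ultimately show ?thesis
      using assms that ly nth_del_nth[of j x p] nth_del_nth[of j y p] by (simp add: axis_line_def)
  qed
  moreover have "length (del_nth j y) = length (del_nth j x)"
    using assms(1) ly length_del_nth by metis
  moreover have "length (del_nth j x) = length x - 1" using assms(1) length_del_nth by blast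
  ultimately show ?thesis unfolding axis_line_def by auto
qed

section \<open>Kuratowski's theorem\<close>

context wo_rel
begin

lemma finite_has_max:
  assumes "finite S" and "S \<noteq> {}" and "S \<subseteq> Field r"
  shows "\<exists>a\<in>S. \<forall>b\<in>S. (b, a) \<in> r"
  using assms
proof (induction S rule: finite_ne_induct)
  case (singleton x)
  then show ?case using REFL by (auto simp: refl_on_def)
next
  case (insert x F)
  then obtain a where a: "a \<in> F" "\<forall>b\<in>F. (b, a) \<in> r" by auto
  have m: "(x, max2 x a) \<in> r" "(a, max2 x a) \<in> r" "max2 x a \<in> {x, a}"
    using max2_greater_among[of x a] insert.prems a(1) by auto
  then have "\<forall>b\<in>insert x F. (b, max2 x a) \<in> r" using a(2) TRANS unfolding trans_def by blast
  moreover have "max2 x a \<in> insert x F" using m(3) a(1) by auto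
  ultimately show ?case by blast
qed

end

definition list_top :: "'b rel \<Rightarrow> 'b list \<Rightarrow> 'b" where
  "list_top r x = (SOME a. a \<in> set x \<and> (\<forall>b\<in>set x. (b, a) \<in> r))"

definition top_pos :: "'b rel \<Rightarrow> 'b list \<Rightarrow> nat" where
  "top_pos r x = (LEAST j. x ! j = list_top r x)"

lemma list_top:
  assumes "Well_order r" and "x \<noteq> []" and "set x \<subseteq> Field r"
  shows "list_top r x \<in> set x" and "\<forall>b\<in>set x. (b, list_top r x) \<in> r"
proof -
  have "wo_rel r" using assms(1) by (simp add: wo_rel_def)
  then have "\<exists>a\<in>set x. \<forall>b\<in>set x. (b, a) \<in> r"
    using wo_rel.finite_has_max assms(2,3) by blast
  then have "list_top r x \<in> set x \<and> (\<forall>b\<in>set x. (b, list_top r x) \<in> r)"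
    unfolding list_top_def Bex_def by (rule someI_ex)
  then show "list_top r x \<in> set x" "\<forall>b\<in>set x. (b, list_top r x) \<in> r" by simp_all
qed

lemma top_pos:
  assumes "Well_order r" and "x \<noteq> []" and "set x \<subseteq> Field r"
  shows "top_pos r x < length x" and "x ! top_pos r x = list_top r x"
    and "\<forall>j<top_pos r x. x ! j \<noteq> list_top r x"
proof -
  obtain j where j: "j < length x" "x ! j = list_top r x"
    using list_top(1)[OF assms] by (auto simp: in_set_conv_nth)
  show "x ! top_pos r x = list_top r x" unfolding top_pos_def using j(2) by (rule LeastI)
  show "top_pos r x < length x"
    using Least_le[of "\<lambda>j. x ! j = list_top r x" j] j unfolding top_pos_def by linarith
  show "\<forall>j<top_pos r x. x ! j \<noteq> list_top r x" unfolding top_pos_def using not_less_Least by blast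
qed

lemma del_nth_top_pos:
  assumes "Well_order r" and "x \<noteq> []" and "set x \<subseteq> Field r"
  shows "del_nth (top_pos r x) x \<in> tuples (under r (list_top r x)) (length x - 1)"
  using list_top(2)[OF assms] set_del_nth_subset[of "top_pos r x" x]
    length_del_nth[OF top_pos(1)[OF assms]]
  by (auto simp: tuples_def under_def)

lemma top_on_axis_line:
  assumes wo: "Well_order r" and x: "x \<noteq> []" "set x \<subseteq> Field r" and y: "set y \<subseteq> Field r"
    and yx: "y \<in> axis_line t x" and t: "t \<noteq> top_pos r x" "t \<noteq> top_pos r y"
  shows "list_top r y = list_top r x" and "top_pos r y = top_pos r x"
proof -
  have ly: "length y = length x" using yx by (simp add: axis_line_def)
  then have y_ne: "y \<noteq> []" using x(1) by auto
  note tx = top_pos[OF wo x] and ty = top_pos[OF wo y_ne y]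
  have same: "y ! j = x ! j" if "j < length x" "j \<noteq> t" for j
    using yx that by (simp add: axis_line_def)
  have yx_top: "y ! top_pos r x = list_top r x" and xy_top: "x ! top_pos r y = list_top r y"
    using same[of "top_pos r x"] same[of "top_pos r y"] tx ty t ly by auto
  have "(list_top r x, list_top r y) \<in> r"
    using list_top(2)[OF wo y_ne y] nth_mem[OF tx(1)[folded ly]] yx_top by metis
  moreover have "(list_top r y, list_top r x) \<in> r"
    using list_top(2)[OF wo x] nth_mem[OF ty(1)[unfolded ly]] xy_top by metis
  ultimately show top: "list_top r y = list_top r x"
    using antisymD[OF wo_rel.ANTISYM] wo by (simp add: wo_rel_def)
  have "\<not> top_pos r y < top_pos r x" using tx(3) xy_top top by auto
  moreover have "\<not> top_pos r x < top_pos r y" using ty(3) yx_top top by auto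
  ultimately show "top_pos r y = top_pos r x" by simp
qed

lemma top_class_on_axis_line:
  assumes wo: "Well_order r" and x: "x \<noteq> []" "set x \<subseteq> Field r" and y: "set y \<subseteq> Field r"
    and yx: "y \<in> axis_line (skip_index (top_pos r x) i) x"
    and same: "skip_index (top_pos r y) i' = skip_index (top_pos r x) i"
  shows "list_top r y = list_top r x" and "top_pos r y = top_pos r x" and "i' = i"
    and "del_nth (top_pos r x) y \<in> axis_line i (del_nth (top_pos r x) x)"
proof -
  have "skip_index (top_pos r x) i \<noteq> top_pos r x" "skip_index (top_pos r x) i \<noteq> top_pos r y"
    using skip_index_neq same by metis+
  then show "list_top r y = list_top r x" and pos: "top_pos r y = top_pos r x"
    using top_on_axis_line[OF wo x y yx] by blast+
  show "i' = i" using same pos skip_index_inject by metis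
  show "del_nth (top_pos r x) y \<in> axis_line i (del_nth (top_pos r x) x)"
    using del_nth_axis_line[OF top_pos(1)[OF wo x] yx] .
qed

text \<open>Deleting the common top coordinate maps a class of points with the same top coordinate
  and the same piece index injectively into one line of that piece.\<close>
lemma card_of_top_class_Int_axis_line:
  fixes \<kappa> :: "'a rel" and r :: "'b rel"
  assumes \<kappa>: "Card_order \<kappa>" and wo: "Well_order r"
    and S: "\<forall>x\<in>S. x \<noteq> [] \<and> set x \<subseteq> Field r"
    and piece: "\<forall>x\<in>S. del_nth (top_pos r x) x \<in> GG (list_top r x) (ix x)"
    and GG: "\<forall>x\<in>S. \<forall>z. |GG (list_top r x) (ix x) \<inter> axis_line (ix x) z| \<le>o \<kappa>"
  shows "|{x \<in> S. skip_index (top_pos r x) (ix x) = t} \<inter> axis_line t z| \<le>o \<kappa>"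
proof (cases "{x \<in> S. skip_index (top_pos r x) (ix x) = t} \<inter> axis_line t z = {}")
  case True
  then show ?thesis using card_of_empty card_of_Field_ordIso[OF \<kappa>] ordLeq_ordIso_trans by metis
next
  case False
  let ?C = "{x \<in> S. skip_index (top_pos r x) (ix x) = t}"
  obtain x where x: "x \<in> ?C" "x \<in> axis_line t z" using False by blast
  define j where "j = top_pos r x"
  have j: "j < length x" using top_pos(1)[OF wo] S x(1) unfolding j_def by blast
  have line: "axis_line t z = axis_line t x" using axis_line_eq[OF x(2)] by simp
  have y_facts: "y ! j = list_top r x \<and>
      del_nth j y \<in> GG (list_top r x) (ix x) \<inter> axis_line (ix x) (del_nth j x)"
    if y: "y \<in> ?C \<inter> axis_line t x" for y
  proof -
    have yx: "y \<in> axis_line (skip_index (top_pos r x) (ix x)) x"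
      and eq: "skip_index (top_pos r y) (ix y) = skip_index (top_pos r x) (ix x)"
      using x(1) y by auto
    have Sx: "x \<noteq> []" "set x \<subseteq> Field r" and Sy: "y \<noteq> []" "set y \<subseteq> Field r"
      using S x(1) y by auto
    note same = top_class_on_axis_line[OF wo Sx Sy(2) yx eq]
    have "y ! top_pos r y = list_top r y" using top_pos(2)[OF wo Sy] .
    moreover have "del_nth (top_pos r y) y \<in> GG (list_top r y) (ix y)" using piece y by blast
    ultimately show ?thesis using same unfolding j_def by simp
  qed
  have "inj_on (del_nth j) (?C \<inter> axis_line t x)"
  proof (rule inj_onI)
    fix y y' assume "y \<in> ?C \<inter> axis_line t x" "y' \<in> ?C \<inter> axis_line t x"
      and "del_nth j y = del_nth j y'"
    moreover from this have "length y = length x" "length y' = length x"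
      by (auto simp: axis_line_def)
    ultimately show "y = y'" using y_facts del_nth_inject j by metis
  qed
  moreover have "del_nth j ` (?C \<inter> axis_line t x)
      \<subseteq> GG (list_top r x) (ix x) \<inter> axis_line (ix x) (del_nth j x)"
    using y_facts by blast
  ultimately have
    "|?C \<inter> axis_line t x| \<le>o |GG (list_top r x) (ix x) \<inter> axis_line (ix x) (del_nth j x)|"
    using card_of_ordLeq by blast
  also have "|GG (list_top r x) (ix x) \<inter> axis_line (ix x) (del_nth j x)| \<le>o \<kappa>"
    using GG x(1) by blast
  finally show ?thesis using line by simp
qed

definition kuratowski_cover :: "'a rel \<Rightarrow> 'b set \<Rightarrow> nat \<Rightarrow> (nat \<Rightarrow> 'b list set) \<Rightarrow> bool" where
  "kuratowski_cover \<kappa> A n G \<longleftrightarrow>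
     tuples A (Suc n) \<subseteq> (\<Union>i\<le>n. G i) \<and> (\<forall>i\<le>n. \<forall>x. |G i \<inter> axis_line i x| \<le>o \<kappa>)"

text \<open>A point of \<open>A\<^sup>n\<^sup>+\<^sup>2\<close> is sorted by the first position of its top coordinate \<open>a\<close> and by the
  piece of the cover of \<open>(under r a)\<^sup>n\<^sup>+\<^sup>1\<close> containing the point with that coordinate deleted.\<close>
lemma kuratowski_cover_Suc:
  assumes \<kappa>: "Card_order \<kappa>" and wo: "Well_order r" and A: "Field r = A"
    and GG: "\<forall>a\<in>A. kuratowski_cover \<kappa> (under r a) n (GG a)"
  shows "\<exists>G. kuratowski_cover \<kappa> A (Suc n) G"
proof -
  let ?S = "tuples A (Suc (Suc n))"
  define ix where "ix x = (LEAST i. i \<le> n \<and> del_nth (top_pos r x) x \<in> GG (list_top r x) i)" for x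
  have S: "x \<noteq> [] \<and> set x \<subseteq> Field r" and top_A: "list_top r x \<in> A"
    and piece: "ix x \<le> n \<and> del_nth (top_pos r x) x \<in> GG (list_top r x) (ix x)"
    if x: "x \<in> ?S" for x
  proof -
    show S: "x \<noteq> [] \<and> set x \<subseteq> Field r" using x A by (auto simp: tuples_def)
    then show top_A: "list_top r x \<in> A" using list_top(1)[OF wo] A by blast
    have "del_nth (top_pos r x) x \<in> tuples (under r (list_top r x)) (Suc n)"
      using del_nth_top_pos[OF wo] S x by (simp add: tuples_def)
    then have "\<exists>i. i \<le> n \<and> del_nth (top_pos r x) x \<in> GG (list_top r x) i"
      using GG top_A unfolding kuratowski_cover_def by blast
    then show "ix x \<le> n \<and> del_nth (top_pos r x) x \<in> GG (list_top r x) (ix x)"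
      unfolding ix_def by (rule LeastI_ex)
  qed
  define G where "G t = {x \<in> ?S. skip_index (top_pos r x) (ix x) = t}" for t
  have "?S \<subseteq> (\<Union>t\<le>Suc n. G t)"
  proof
    fix x assume x: "x \<in> ?S"
    then have "skip_index (top_pos r x) (ix x) \<le> Suc n"
      using piece[OF x] by (simp add: skip_index_def)
    then show "x \<in> (\<Union>t\<le>Suc n. G t)" using x by (auto simp: G_def)
  qed
  moreover have "|G t \<inter> axis_line t z| \<le>o \<kappa>" for t z
    unfolding G_def
  proof (rule card_of_top_class_Int_axis_line[OF \<kappa> wo])
    show "\<forall>x\<in>?S. \<forall>z. |GG (list_top r x) (ix x) \<inter> axis_line (ix x) z| \<le>o \<kappa>"
      using GG top_A piece unfolding kuratowski_cover_def by blast
  qed (use S piece in blast)+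
  ultimately show ?thesis unfolding kuratowski_cover_def by blast
qed

theorem kuratowski_cover_exists:
  fixes \<kappa> :: "'a rel" and B :: "real set" and A :: "'b set"
  assumes \<kappa>: "Card_order \<kappa>" and inf: "\<not> finite (Field \<kappa>)"
    and "succ_iter_real \<kappa> n B" and "|A| \<le>o |B|"
  shows "\<exists>G. kuratowski_cover \<kappa> A n G"
  using assms(3,4)
proof (induction n arbitrary: A B)
  case 0
  have "inj_on hd (tuples A 1)" and "hd ` tuples A 1 \<subseteq> A"
    by (auto simp: tuples_def inj_on_def length_Suc_conv)
  then have "|tuples A 1| \<le>o |A|" using card_of_ordLeq by blast
  also have "|A| \<le>o \<kappa>" using 0 ordLeq_ordIso_trans by auto
  finally have "|tuples A 1 \<inter> axis_line i x| \<le>o \<kappa>" for i x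
    using card_of_mono1[of "tuples A 1 \<inter> axis_line i x" "tuples A 1"] ordLeq_transitive by blast
  then have "kuratowski_cover \<kappa> A 0 (\<lambda>i. tuples A 1)" unfolding kuratowski_cover_def by simp
  then show ?case by blast
next
  case (Suc n)
  obtain B' where B': "succ_iter_real \<kappa> n B'" "|B| =o cardSuc |B'|" using Suc.prems by auto
  have A_le: "|A| \<le>o cardSuc |B'|" using Suc.prems(2) B'(2) ordLeq_ordIso_trans by blast
  have B'_inf: "\<not> finite B'"
    using Card_order_ordLeq_infinite[OF \<kappa> inf succ_iter_real_ordLeq[OF \<kappa> B'(1)]] .
  have "|under (card_of A) a| \<le>o |B'|" if "a \<in> A" for a
    using card_of_under_ordLeq_of_cardSuc[OF A_le B'_inf that] .
  then have "\<forall>a\<in>A. \<exists>G. kuratowski_cover \<kappa> (under (card_of A) a) n G" using Suc.IH[OF B'(1)] by blast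
  then obtain GG where "\<forall>a\<in>A. kuratowski_cover \<kappa> (under (card_of A) a) n (GG a)" by metis
  then show ?case
    using kuratowski_cover_Suc[OF \<kappa> card_of_Well_order Field_card_of] by blast
qed

section \<open>The converse of Kuratowski's theorem\<close>

lemma append_axis_line: "y \<in> axis_line i x \<Longrightarrow> y @ [b] \<in> axis_line i (x @ [b])"
  by (auto simp: axis_line_def nth_append)

lemma append_in_last_axis_line: "x @ [b] \<in> axis_line (length x) (x @ [b'])"
  by (auto simp: axis_line_def nth_append)

definition strict_kuratowski_cover :: "'a rel \<Rightarrow> 'b set \<Rightarrow> nat \<Rightarrow> (nat \<Rightarrow> 'b list set) \<Rightarrow> bool" where
  "strict_kuratowski_cover \<kappa> B n G \<longleftrightarrow>
     tuples B (Suc n) \<subseteq> (\<Union>i\<le>n. G i) \<and>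
     (\<forall>i\<le>n. \<forall>x. |G i \<inter> axis_line i x \<inter> tuples B (Suc n)| <o \<kappa>)"

lemma strict_kuratowski_cover_fibre:
  assumes \<kappa>: "Card_order \<kappa>" "\<not> finite (Field \<kappa>)"
    and G: "strict_kuratowski_cover \<kappa> B (Suc n) G" and x: "x \<in> tuples B (Suc n)"
  shows "|{b \<in> B. x @ [b] \<in> G (Suc n)}| <o \<kappa>"
proof (cases "{b \<in> B. x @ [b] \<in> G (Suc n)} = {}")
  case True
  then show ?thesis using finite_ordLess_infinite_Card_order[OF \<kappa>] by (metis finite.emptyI)
next
  case False
  then obtain b0 where "b0 \<in> B" by blast
  have "inj_on (\<lambda>b. x @ [b]) {b \<in> B. x @ [b] \<in> G (Suc n)}" by (auto simp: inj_on_def)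
  moreover have "(\<lambda>b. x @ [b]) ` {b \<in> B. x @ [b] \<in> G (Suc n)}
      \<subseteq> G (Suc n) \<inter> axis_line (Suc n) (x @ [b0]) \<inter> tuples B (Suc (Suc n))"
    using x append_in_last_axis_line[of x] by (auto simp: tuples_def)
  ultimately have "|{b \<in> B. x @ [b] \<in> G (Suc n)}|
      \<le>o |G (Suc n) \<inter> axis_line (Suc n) (x @ [b0]) \<inter> tuples B (Suc (Suc n))|"
    using card_of_ordLeq by blast
  also have "|G (Suc n) \<inter> axis_line (Suc n) (x @ [b0]) \<inter> tuples B (Suc (Suc n))| <o \<kappa>"
    using G unfolding strict_kuratowski_cover_def by blast
  finally show ?thesis .
qed

lemma strict_kuratowski_cover_slice:
  assumes G: "strict_kuratowski_cover \<kappa> B (Suc n) G" and X: "X \<subseteq> B" and b: "b \<in> B"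
    and avoid: "\<forall>x\<in>tuples X (Suc n). x @ [b] \<notin> G (Suc n)"
  shows "strict_kuratowski_cover \<kappa> X n (\<lambda>i. {x. x @ [b] \<in> G i})"
  unfolding strict_kuratowski_cover_def
proof (intro conjI subsetI allI impI)
  fix x assume x: "x \<in> tuples X (Suc n)"
  then have "x @ [b] \<in> tuples B (Suc (Suc n))" using X b by (auto simp: tuples_def)
  then obtain i where "i \<le> Suc n" "x @ [b] \<in> G i"
    using G unfolding strict_kuratowski_cover_def by blast
  moreover have "i \<noteq> Suc n" using avoid x calculation(2) by blast
  ultimately show "x \<in> (\<Union>i\<le>n. {x. x @ [b] \<in> G i})" by auto
next
  fix i x assume i: "i \<le> n"
  let ?S = "{y. y @ [b] \<in> G i} \<inter> axis_line i x \<inter> tuples X (Suc n)"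
  have "inj_on (\<lambda>y. y @ [b]) ?S" by (auto simp: inj_on_def)
  moreover have "(\<lambda>y. y @ [b]) ` ?S \<subseteq> G i \<inter> axis_line i (x @ [b]) \<inter> tuples B (Suc (Suc n))"
    using X b append_axis_line by (fastforce simp: tuples_def)
  ultimately have "|?S| \<le>o |G i \<inter> axis_line i (x @ [b]) \<inter> tuples B (Suc (Suc n))|"
    using card_of_ordLeq by blast
  also have "|G i \<inter> axis_line i (x @ [b]) \<inter> tuples B (Suc (Suc n))| <o \<kappa>"
    using G i unfolding strict_kuratowski_cover_def by simp
  finally show "|?S| <o \<kappa>" .
qed

lemma strict_kuratowski_cover_0_ordLess:
  assumes "strict_kuratowski_cover \<kappa> B 0 G" and "b \<in> B"
  shows "|B| <o \<kappa>"
proof -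
  have "inj_on (\<lambda>a. [a]) B" by (auto simp: inj_on_def)
  moreover have "(\<lambda>a. [a]) ` B \<subseteq> G 0 \<inter> axis_line 0 [b] \<inter> tuples B 1"
    using assms(1) unfolding strict_kuratowski_cover_def by (auto simp: tuples_def axis_line_def)
  ultimately have "|B| \<le>o |G 0 \<inter> axis_line 0 [b] \<inter> tuples B 1|" using card_of_ordLeq by blast
  moreover have "|G 0 \<inter> axis_line 0 [b] \<inter> tuples B 1| <o \<kappa>"
    using assms(1) unfolding strict_kuratowski_cover_def by auto
  ultimately show ?thesis using ordLeq_ordLess_trans by blast
qed

text \<open>In the induction step fewer than \<open>|B|\<close> values \<open>b\<close> are excluded by the condition on
  \<open>G\<^sub>n\<^sub>+\<^sub>1\<close>, and slicing at a remaining one gives a cover of \<open>X\<^sup>n\<^sup>+\<^sup>1\<close> for a smaller \<open>X \<subseteq> B\<close>.\<close>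
theorem no_strict_kuratowski_cover:
  fixes \<kappa> :: "'a rel" and B :: "real set"
  assumes \<kappa>: "Card_order \<kappa>" "\<not> finite (Field \<kappa>)" and "succ_iter_real \<kappa> n B"
  shows "\<not> strict_kuratowski_cover \<kappa> B n G"
  using assms(3)
proof (induction n arbitrary: B G)
  case 0
  then have B: "|B| =o \<kappa>" by simp
  then have "\<not> finite B" using card_of_ordIso_finite_Field[OF \<kappa>(1)] \<kappa>(2) ordIso_symmetric by blast
  then obtain b where b: "b \<in> B" using infinite_imp_nonempty by blast
  show ?case
  proof
    assume "strict_kuratowski_cover \<kappa> B 0 G"
    then have "|B| <o \<kappa>" using b by (rule strict_kuratowski_cover_0_ordLess)
    then show False using B by (simp add: not_ordLess_ordIso)
  qed
next
  case (Suc n)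
  obtain X where X: "X \<subseteq> B" "succ_iter_real \<kappa> n X" "|X| <o |B|"
    using succ_iter_real_Suc_subset[OF Suc.prems] .
  have \<kappa>X: "\<kappa> \<le>o |X|" using succ_iter_real_ordLeq[OF \<kappa>(1) X(2)] .
  have X_inf: "\<not> finite X" using Card_order_ordLeq_infinite[OF \<kappa> \<kappa>X] .
  show ?case
  proof
    assume G: "strict_kuratowski_cover \<kappa> B (Suc n) G"
    let ?excluded = "\<Union>x\<in>tuples X (Suc n). {b \<in> B. x @ [b] \<in> G (Suc n)}"
    have "|{b \<in> B. x @ [b] \<in> G (Suc n)}| \<le>o |X|" if "x \<in> tuples X (Suc n)" for x
    proof -
      have "x \<in> tuples B (Suc n)" using that X(1) by (auto simp: tuples_def)
      then have "|{b \<in> B. x @ [b] \<in> G (Suc n)}| <o \<kappa>"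
        by (rule strict_kuratowski_cover_fibre[OF \<kappa> G])
      then show ?thesis using \<kappa>X ordLess_ordLeq_trans ordLess_imp_ordLeq by blast
    qed
    then have "|?excluded| \<le>o |X|"
      by (intro card_of_UNION_ordLeq_infinite[OF X_inf card_of_tuples_infinite[OF X_inf]]) blast
    then have "\<not> B \<subseteq> ?excluded"
      using X(3) card_of_mono1 not_ordLess_ordLeq ordLeq_transitive by blast
    then obtain b where "b \<in> B" "b \<notin> ?excluded" by blast
    then have "strict_kuratowski_cover \<kappa> X n (\<lambda>i. {x. x @ [b] \<in> G i})"
      using strict_kuratowski_cover_slice[OF G X(1)] by blast
    then show False using Suc.IH[OF X(2)] by blast
  qed
qed

section \<open>The cross template\<close>

definition axis_point :: "nat \<Rightarrow> nat \<times> nat \<Rightarrow> real list" where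
  "axis_point d s = (replicate d 0)[fst s := real (snd s)]"

text \<open>The points \<open>0, e\<^sub>0, 2e\<^sub>0, \<dots>, (r+1)e\<^sub>0\<close> and \<open>e\<^sub>1, \<dots>, e\<^sub>d\<^sub>-\<^sub>1\<close>, indexed by (axis, multiple).\<close>
definition cross_support :: "nat \<Rightarrow> nat \<Rightarrow> (nat \<times> nat) set" where
  "cross_support d r = {(0, q) | q. q \<le> Suc r} \<union> {(i, 1) | i. 0 < i \<and> i < d}"

definition cross_template :: "nat \<Rightarrow> nat \<Rightarrow> real list set" where
  "cross_template d r = axis_point d ` cross_support d r"

lemma cross_support_fst_less: "1 \<le> d \<Longrightarrow> s \<in> cross_support d r \<Longrightarrow> fst s < d"
  by (auto simp: cross_support_def)

lemma cross_support_snd_eq_0: "s \<in> cross_support d r \<Longrightarrow> snd s = 0 \<Longrightarrow> s = (0, 0)"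
  by (auto simp: cross_support_def)

lemma zero_in_cross_support: "(0, 0) \<in> cross_support d r"
  by (simp add: cross_support_def)

lemma unit_in_cross_support: "i < d \<Longrightarrow> (i, 1) \<in> cross_support d r"
  by (cases "i = 0") (auto simp: cross_support_def)

lemma finite_cross_support: "finite (cross_support d r)"
proof -
  have "cross_support d r \<subseteq> {..<d + 1} \<times> {..Suc r}" by (auto simp: cross_support_def)
  then show ?thesis using finite_subset by blast
qed

lemma card_cross_support:
  assumes "1 \<le> d"
  shows "card (cross_support d r) = r + d + 1"
proof -
  have "cross_support d r = Pair 0 ` {..Suc r} \<union> (\<lambda>i. (i, 1)) ` {1..<d}"
    by (auto simp: cross_support_def)
  moreover have "card (Pair 0 ` {..Suc r} \<union> (\<lambda>i. (i, 1::nat)) ` {1..<d}) = Suc (Suc r) + (d - 1)"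
    by (subst card_Un_disjoint) (auto simp: card_image inj_on_def)
  ultimately show ?thesis using assms by simp
qed

lemma length_axis_point [simp]: "length (axis_point d s) = d"
  by (simp add: axis_point_def)

lemma nth_axis_point:
  "t < d \<Longrightarrow> fst s < d \<Longrightarrow> axis_point d s ! t = (if t = fst s then real (snd s) else 0)"
  by (simp add: axis_point_def nth_list_update)

lemma inj_on_axis_point:
  assumes "1 \<le> d"
  shows "inj_on (axis_point d) (cross_support d r)"
proof (rule inj_onI)
  fix s s' assume s: "s \<in> cross_support d r" and s': "s' \<in> cross_support d r"
    and eq: "axis_point d s = axis_point d s'"
  have fst: "fst s < d" "fst s' < d" using cross_support_fst_less[OF assms] s s' by auto
  have "real (snd s) = (if fst s = fst s' then real (snd s') else 0)"
    using nth_axis_point[of "fst s" d s] nth_axis_point[of "fst s" d s'] fst eq by simp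
  moreover have "real (snd s') = (if fst s' = fst s then real (snd s) else 0)"
    using nth_axis_point[of "fst s'" d s] nth_axis_point[of "fst s'" d s'] fst eq by simp
  ultimately show "s = s'"
    using cross_support_snd_eq_0 s s'
    by (cases "snd s = 0") (auto simp: prod_eq_iff split: if_splits)
qed

lemma template_cross_template:
  assumes "1 \<le> d"
  shows "template d (r + d + 1) (cross_template d r)"
  unfolding template_def cross_template_def
  using finite_cross_support card_image[OF inj_on_axis_point[OF assms]] card_cross_support[OF assms]
  by simp

text \<open>The centre is the image of the origin; the images of the unit points lie on its axis
  parallels.\<close>
lemma cross_copy_centre:
  assumes d: "1 \<le> d" and Q: "Q \<in> L_edges d (cross_template d r)"
  shows "\<exists>x\<in>Q. \<forall>i<d. \<exists>y\<in>Q. y \<noteq> x \<and> y \<in> axis_line i x"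
proof -
  let ?P = "cross_template d r"
  have Q_Rd: "Q \<subseteq> Rd d" and Q_card: "card Q = card ?P"
    using Q by (auto simp: L_edges_def template_def)
  obtain f where f: "f ` ?P = Q"
    and hom: "\<forall>x\<in>?P. \<forall>y\<in>?P. \<forall>i<d. x ! i = y ! i \<longrightarrow> f x ! i = f y ! i"
    using Q unfolding L_edges_def hom_image_def by blast
  have "finite ?P" unfolding cross_template_def using finite_cross_support by simp
  then have inj: "inj_on f ?P" using eq_card_imp_inj_on f Q_card by metis
  define z where "z = axis_point d (0, 0)"
  have z: "z \<in> ?P" unfolding z_def cross_template_def using zero_in_cross_support by blast
  have "\<exists>y\<in>Q. y \<noteq> f z \<and> y \<in> axis_line i (f z)" if i: "i < d" for i
  proof -
    define p where "p = axis_point d (i, 1)"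
    have p: "p \<in> ?P" unfolding p_def cross_template_def using unit_in_cross_support[OF i] by blast
    have "p \<noteq> z"
      unfolding p_def z_def
      using inj_on_axis_point[OF d] unit_in_cross_support[OF i] zero_in_cross_support
      by (metis inj_on_contraD old.prod.inject zero_neq_one)
    then have ne: "f p \<noteq> f z" using inj p z by (simp add: inj_on_eq_iff)
    have "f p ! t = f z ! t" if t: "t < d" "t \<noteq> i" for t
    proof -
      have "p ! t = z ! t" unfolding p_def z_def using nth_axis_point[of t d] t i by simp
      then show ?thesis using hom p z t(1) by blast
    qed
    moreover have "length (f p) = d" "length (f z) = d" using Q_Rd f p z by (auto simp: Rd_def)
    ultimately have "f p \<in> axis_line i (f z)" by (simp add: axis_line_def)
    then show ?thesis using ne p f by blast
  qed
  then show ?thesis using z f by blast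
qed

lemma cross_copy_in_L_edges:
  assumes d: "1 \<le> d" and x: "x \<in> Rd d" and inj: "inj_on g (cross_support d r)"
    and g0: "g (0, 0) = x" and g: "\<forall>s\<in>cross_support d r. g s \<in> axis_line (fst s) x"
  shows "g ` cross_support d r \<in> L_edges d (cross_template d r)"
proof -
  let ?S = "cross_support d r" and ?Q = "g ` cross_support d r"
  define f where "f = g \<circ> inv_into ?S (axis_point d)"
  have f: "f ` cross_template d r = ?Q"
    unfolding f_def cross_template_def image_comp[symmetric]
    using inv_into_image_cancel[OF inj_on_axis_point[OF d] subset_refl] by simp
  have Q_Rd: "?Q \<subseteq> Rd d" using g x by (auto simp: axis_line_def Rd_def)
  have card: "card ?Q = card (cross_template d r)"
    unfolding cross_template_def card_image[OF inj] card_image[OF inj_on_axis_point[OF d]] ..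
  have g_nth: "g s ! t = x ! t" if "s \<in> ?S" "t < d" "t \<noteq> fst s \<or> snd s = 0" for s t
  proof (cases "snd s = 0")
    case True
    then show ?thesis using that(1) g0 cross_support_snd_eq_0 by metis
  next
    case False
    then have "g s \<in> axis_line (fst s) x" "t \<noteq> fst s" using g that by auto
    then show ?thesis using that(2) x by (simp add: axis_line_def Rd_def)
  qed
  have "f p ! t = f p' ! t"
    if p: "p \<in> cross_template d r" and p': "p' \<in> cross_template d r" and t: "t < d"
      and eq: "p ! t = p' ! t" for p p' t
  proof -
    obtain s s' where s: "s \<in> ?S" "p = axis_point d s" and s': "s' \<in> ?S" "p' = axis_point d s'"
      using p p' unfolding cross_template_def by blast
    then have f_p: "f p = g s" "f p' = g s'"
      unfolding f_def using inv_into_f_f[OF inj_on_axis_point[OF d]] by simp_all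
    have nth: "p ! t = (if t = fst s then real (snd s) else 0)"
      "p' ! t = (if t = fst s' then real (snd s') else 0)"
      using nth_axis_point[OF t] cross_support_fst_less[OF d] s s' by auto
    show ?thesis
    proof (cases "p ! t = 0")
      case True
      then show ?thesis
        using f_p g_nth[OF s(1) t] g_nth[OF s'(1) t] nth eq by (simp split: if_splits)
    next
      case False
      then have "s = s'" using nth eq by (simp add: prod_eq_iff split: if_splits)
      then show ?thesis using f_p by simp
    qed
  qed
  then show ?thesis
    unfolding L_edges_def template_def hom_image_def
    using Q_Rd card f finite_cross_support by (auto simp: Rd_def)
qed

lemma cross_copy_exists:
  assumes d: "1 \<le> d" and x: "x \<in> C" and C: "C \<subseteq> Rd d"
    and inf: "\<forall>i<d. \<not> finite (C \<inter> axis_line i x)"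
  shows "\<exists>Q\<in>L_edges d (cross_template d r). Q \<subseteq> C"
proof -
  have "\<forall>i. \<exists>h::nat \<Rightarrow> real list. i < d \<longrightarrow> inj h \<and> range h \<subseteq> C \<inter> axis_line i x - {x}"
    using inf infinite_iff_countable_subset[of "C \<inter> axis_line _ x - {x}"] by auto
  then obtain h :: "nat \<Rightarrow> nat \<Rightarrow> real list"
    where "\<forall>i. i < d \<longrightarrow> inj (h i) \<and> range (h i) \<subseteq> C \<inter> axis_line i x - {x}"
    by (rule choice[THEN exE]) blast
  then have h: "\<And>i. i < d \<Longrightarrow> inj (h i) \<and> range (h i) \<subseteq> C \<inter> axis_line i x - {x}"
    by blast
  define g where "g s = (if snd s = 0 then x else h (fst s) (snd s))" for s
  have g: "g s \<in> C \<and> g s \<in> axis_line (fst s) x \<and> (g s = x \<longleftrightarrow> snd s = 0)"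
    if "s \<in> cross_support d r" for s
    using h[of "fst s"] cross_support_fst_less[OF d that] x by (auto simp: g_def)
  have "inj_on g (cross_support d r)"
  proof (rule inj_onI)
    fix s s' assume s: "s \<in> cross_support d r" and s': "s' \<in> cross_support d r" and eq: "g s = g s'"
    show "s = s'"
    proof (cases "snd s = 0")
      case True
      then show ?thesis using g[OF s] g[OF s'] eq cross_support_snd_eq_0 s s' by metis
    next
      case False
      then have "fst s = fst s'"
        using g[OF s] g[OF s'] eq axis_line_Int_axis_line by metis
      moreover have "snd s' \<noteq> 0" using False g[OF s] g[OF s'] eq by metis
      ultimately have "h (fst s) (snd s) = h (fst s) (snd s')" using False eq by (simp add: g_def)
      then show ?thesis
        using h[of "fst s"] cross_support_fst_less[OF d s] \<open>fst s = fst s'\<close>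
        by (simp add: inj_eq prod_eq_iff)
    qed
  qed
  moreover have "g (0, 0) = x" by (simp add: g_def)
  ultimately have "g ` cross_support d r \<in> L_edges d (cross_template d r)"
    using cross_copy_in_L_edges[OF d] x C g by blast
  moreover have "g ` cross_support d r \<subseteq> C" using g by blast
  ultimately show ?thesis by blast
qed

section \<open>The chromatic number\<close>

text \<open>A point \<open>x\<close> is coloured by the least \<open>i\<close> with \<open>x \<in> G\<^sub>i\<close> together with a code of \<open>x\<close>
  that is injective on \<open>G\<^sub>i \<inter> axis_line i x\<close>.  The code depends only on that set, so points of
  the same line share it.\<close>
lemma kuratowski_cover_separating_colouring:
  fixes \<kappa> :: "'a rel" and G :: "nat \<Rightarrow> 'b list set"
  assumes \<kappa>: "Card_order \<kappa>" and G: "kuratowski_cover \<kappa> A m G"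
  shows "\<exists>c :: 'b list \<Rightarrow> nat \<times> 'a.
           (\<forall>x\<in>tuples A (Suc m). fst (c x) \<le> m \<and> snd (c x) \<in> Field \<kappa>) \<and>
           (\<forall>x\<in>tuples A (Suc m). \<forall>y\<in>tuples A (Suc m).
              c y = c x \<longrightarrow> y \<in> axis_line (fst (c x)) x \<longrightarrow> y = x)"
proof -
  define code where "code L = (SOME h. inj_on h L \<and> h ` L \<subseteq> Field \<kappa>)" for L :: "'b list set"
  have code: "inj_on (code (G i \<inter> axis_line i x)) (G i \<inter> axis_line i x) \<and>
      code (G i \<inter> axis_line i x) ` (G i \<inter> axis_line i x) \<subseteq> Field \<kappa>" if "i \<le> m" for i x
  proof -
    have "|G i \<inter> axis_line i x| \<le>o |Field \<kappa>|"
      using G that card_of_Field_ordIso[OF \<kappa>] ordLeq_ordIso_trans ordIso_symmetric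
      unfolding kuratowski_cover_def by blast
    then have "\<exists>h. inj_on h (G i \<inter> axis_line i x) \<and> h ` (G i \<inter> axis_line i x) \<subseteq> Field \<kappa>"
      by (simp only: card_of_ordLeq)
    then show ?thesis unfolding code_def by (rule someI_ex)
  qed
  define piece where "piece x = (LEAST i. i \<le> m \<and> x \<in> G i)" for x
  have piece: "piece x \<le> m \<and> x \<in> G (piece x)" if "x \<in> tuples A (Suc m)" for x
  proof -
    have "\<exists>i. i \<le> m \<and> x \<in> G i" using G that unfolding kuratowski_cover_def by blast
    then show ?thesis unfolding piece_def by (rule LeastI_ex)
  qed
  define c where "c x = (piece x, code (G (piece x) \<inter> axis_line (piece x) x) x)" for x
  have "fst (c x) \<le> m \<and> snd (c x) \<in> Field \<kappa>" if "x \<in> tuples A (Suc m)" for x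
    using piece[OF that] code[of "piece x" x] by (auto simp: c_def)
  moreover have "y = x"
    if x: "x \<in> tuples A (Suc m)" and y: "y \<in> tuples A (Suc m)"
      and eq: "c y = c x" and line: "y \<in> axis_line (fst (c x)) x" for x y
  proof -
    define i where "i = piece x"
    have "piece y = i" using eq unfolding c_def i_def by simp
    then have xy: "x \<in> G i \<inter> axis_line i x" "y \<in> G i \<inter> axis_line i x"
      using piece[OF x] piece[OF y] line unfolding i_def c_def by auto
    have "code (G i \<inter> axis_line i x) y = code (G i \<inter> axis_line i x) x"
      using eq \<open>piece y = i\<close> axis_line_eq[of y i x] xy(2) unfolding c_def i_def by simp
    then show ?thesis using code[of i x] piece[OF x] xy unfolding i_def by (meson inj_onD)
  qed
  ultimately show ?thesis by blast
qed

lemma separating_colouring_proper: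
  fixes \<kappa> :: "'a rel" and c :: "real list \<Rightarrow> nat \<times> 'a"
  assumes \<kappa>: "Card_order \<kappa>" "\<not> finite (Field \<kappa>)" and \<kappa>_le: "\<kappa> \<le>o |UNIV :: real set|"
    and c_range: "\<forall>x\<in>Rd (Suc m). fst (c x) \<le> m \<and> snd (c x) \<in> Field \<kappa>"
    and c_sep: "\<forall>x\<in>Rd (Suc m). \<forall>y\<in>Rd (Suc m). c y = c x \<longrightarrow> y \<in> axis_line (fst (c x)) x \<longrightarrow> y = x"
  shows "\<exists>c' :: real list \<Rightarrow> real list.
           proper_colouring (Rd (Suc m)) (L_edges (Suc m) (cross_template (Suc m) r)) c' \<and>
           |c' ` Rd (Suc m)| \<le>o \<kappa>"
proof -
  have Field_\<kappa>: "|Field \<kappa>| =o \<kappa>" using card_of_Field_ordIso[OF \<kappa>(1)] .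
  obtain e :: "'a \<Rightarrow> real" where e: "inj_on e (Field \<kappa>)"
    using card_of_ordLeq[of "Field \<kappa>" "UNIV :: real set"] Field_\<kappa> \<kappa>_le ordIso_ordLeq_trans by blast
  define enc where "enc = (\<lambda>(i, a). [real i, e a])"
  have enc_inj: "inj_on enc ({..m} \<times> Field \<kappa>)"
  proof (rule inj_onI)
    fix p q assume "p \<in> {..m} \<times> Field \<kappa>" "q \<in> {..m} \<times> Field \<kappa>" "enc p = enc q"
    then show "p = q" using inj_onD[OF e] by (auto simp: enc_def)
  qed
  have c_mem: "c x \<in> {..m} \<times> Field \<kappa>" if "x \<in> Rd (Suc m)" for x
    using c_range that by (auto simp: mem_Times_iff)
  have c_eq: "c y = c x" if "x \<in> Rd (Suc m)" "y \<in> Rd (Suc m)" "enc (c y) = enc (c x)" for x y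
    using inj_onD[OF enc_inj that(3) c_mem[OF that(2)] c_mem[OF that(1)]] .
  have "(enc \<circ> c) ` Rd (Suc m) \<subseteq> enc ` ({..m} \<times> Field \<kappa>)"
    unfolding image_comp[symmetric] using c_mem by (intro image_mono) blast
  then have "|(enc \<circ> c) ` Rd (Suc m)| \<le>o |{..m} \<times> Field \<kappa>|"
    using card_of_mono1 card_of_image ordLeq_transitive by metis
  also have "|{..m} \<times> Field \<kappa>| =o |Field \<kappa>|"
  proof -
    have "|{..m}| <o |Field \<kappa>|"
      using finite_ordLess_infinite_Card_order[OF card_of_Card_order, of "Field \<kappa>" "{..m}"] \<kappa>(2)
      by (simp add: Field_card_of finite_atMost)
    then have "|{..m}| \<le>o |Field \<kappa>|" by (rule ordLess_imp_ordLeq)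
    then show ?thesis using card_of_Times_infinite[OF \<kappa>(2), of "{..m}"] by simp
  qed
  also have "|Field \<kappa>| =o \<kappa>" by (rule Field_\<kappa>)
  finally have size: "|(enc \<circ> c) ` Rd (Suc m)| \<le>o \<kappa>" .
  have "\<exists>x\<in>Q. \<exists>y\<in>Q. (enc \<circ> c) x \<noteq> (enc \<circ> c) y"
    if Q: "Q \<in> L_edges (Suc m) (cross_template (Suc m) r)" for Q
  proof -
    have Q_Rd: "Q \<subseteq> Rd (Suc m)" using Q by (simp add: L_edges_def)
    obtain x where x: "x \<in> Q" and centre: "\<forall>i<Suc m. \<exists>y\<in>Q. y \<noteq> x \<and> y \<in> axis_line i x"
      using cross_copy_centre[OF _ Q] by auto
    have x_Rd: "x \<in> Rd (Suc m)" using x Q_Rd by blast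
    then have "fst (c x) < Suc m" using c_range by (simp add: less_Suc_eq_le)
    then obtain y where y: "y \<in> Q" "y \<noteq> x" "y \<in> axis_line (fst (c x)) x" using centre by blast
    then have "enc (c y) \<noteq> enc (c x)" using c_eq c_sep x Q_Rd by blast
    then show ?thesis using x y(1) by auto
  qed
  then have "proper_colouring (Rd (Suc m)) (L_edges (Suc m) (cross_template (Suc m) r)) (enc \<circ> c)"
    unfolding proper_colouring_def by blast
  then show ?thesis using size by blast
qed

text \<open>Otherwise the colour class of \<open>x\<close> would contain a copy of the cross centred at \<open>x\<close>.\<close>
lemma proper_colouring_finite_class_on_axis_line:
  assumes c: "proper_colouring (Rd d) (L_edges d (cross_template d r)) c"
    and d: "1 \<le> d" and x: "x \<in> Rd d"
  shows "\<exists>i<d. finite ({y \<in> Rd d. c y = c x} \<inter> axis_line i x)"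
proof (rule ccontr)
  let ?C = "{y \<in> Rd d. c y = c x}"
  assume "\<not> ?thesis"
  then have "\<forall>i<d. \<not> finite (?C \<inter> axis_line i x)" by blast
  then have "\<exists>Q\<in>L_edges d (cross_template d r). Q \<subseteq> ?C"
    using x by (intro cross_copy_exists[OF d]) auto
  then obtain Q where "Q \<in> L_edges d (cross_template d r)" and Q: "Q \<subseteq> ?C" ..
  then obtain y z where "y \<in> Q" "z \<in> Q" "c y \<noteq> c z"
    using c unfolding proper_colouring_def by blast
  then show False using Q[THEN subsetD] by (metis (mono_tags, lifting) mem_Collect_eq)
qed

lemma card_of_finite_class_points_Int_axis_line:
  fixes \<kappa> :: "'a rel" and c :: "'b list \<Rightarrow> 'c"
  assumes \<kappa>: "Card_order \<kappa>" "\<not> finite (Field \<kappa>)" and few: "|c ` V| <o \<kappa>"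
  shows "|{x \<in> V. finite ({y \<in> V. c y = c x} \<inter> axis_line i x)} \<inter> axis_line i z| <o \<kappa>"
proof -
  let ?L = "{x \<in> V. finite ({y \<in> V. c y = c x} \<inter> axis_line i x)} \<inter> axis_line i z"
  have "\<forall>col\<in>c ` V. finite {y \<in> ?L. c y = col}"
  proof
    fix col
    show "finite {y \<in> ?L. c y = col}"
  proof (cases "{y \<in> ?L. c y = col} = {}")
    case True
    then show ?thesis by (simp only: finite.emptyI)
  next
    case False
    then obtain x where x: "x \<in> ?L" "c x = col" by blast
    then have "{y \<in> ?L. c y = col} \<subseteq> {y \<in> V. c y = c x} \<inter> axis_line i x"
      using axis_line_eq[of x i z] by auto
    moreover have "finite ({y \<in> V. c y = c x} \<inter> axis_line i x)" using x(1) by blast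
    ultimately show ?thesis by (rule finite_subset)
  qed
  qed
  then have "|\<Union>col\<in>c ` V. {y \<in> ?L. c y = col}| <o \<kappa>"
    by (rule card_of_UNION_finite_ordLess[OF \<kappa> few])
  moreover have "?L \<subseteq> (\<Union>col\<in>c ` V. {y \<in> ?L. c y = col})" by blast
  ultimately show ?thesis using ordLeq_ordLess_trans[OF card_of_mono1] by blast
qed

text \<open>With fewer than \<open>\<kappa>\<close> colours, the points whose colour class is finite on their parallel
  to the \<open>i\<close>-th axis would form a strict Kuratowski cover.\<close>
lemma proper_colouring_ordLeq_card_of_image:
  fixes \<kappa> :: "'a rel" and B :: "real set" and c :: "real list \<Rightarrow> 'c"
  assumes \<kappa>: "Card_order \<kappa>" "\<not> finite (Field \<kappa>)" and B: "succ_iter_real \<kappa> m B"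
    and c: "proper_colouring (Rd (Suc m)) (L_edges (Suc m) (cross_template (Suc m) r)) c"
  shows "\<kappa> \<le>o |c ` Rd (Suc m)|"
proof (rule ccontr)
  let ?V = "Rd (Suc m)"
  assume "\<not> \<kappa> \<le>o |c ` ?V|"
  then have few: "|c ` ?V| <o \<kappa>"
    using not_ordLeq_iff_ordLess[OF card_of_Well_order[of "c ` ?V"]
        card_order_on_well_order_on[OF \<kappa>(1)]]
    by simp
  define sparse where "sparse i = {x \<in> ?V. finite ({y \<in> ?V. c y = c x} \<inter> axis_line i x)}" for i
  have cover: "tuples B (Suc m) \<subseteq> (\<Union>i\<le>m. sparse i)"
  proof
    fix x assume "x \<in> tuples B (Suc m)"
    then have "x \<in> ?V" by (simp add: tuples_def Rd_def)
    then show "x \<in> (\<Union>i\<le>m. sparse i)"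
      using proper_colouring_finite_class_on_axis_line[OF c] unfolding sparse_def by fastforce
  qed
  have "|sparse i \<inter> axis_line i z| <o \<kappa>" for i z
    unfolding sparse_def by (rule card_of_finite_class_points_Int_axis_line[OF \<kappa> few])
  then have "|sparse i \<inter> axis_line i z \<inter> tuples B (Suc m)| <o \<kappa>" for i z
    using ordLeq_ordLess_trans[OF card_of_mono1[OF Int_lower1]] by blast
  then have "strict_kuratowski_cover \<kappa> B m sparse"
    using cover unfolding strict_kuratowski_cover_def by blast
  then show False using no_strict_kuratowski_cover[OF \<kappa> B] by blast
qed

lemma chromatic_number_isI:
  fixes c :: "'v \<Rightarrow> 'v"
  assumes "proper_colouring V E c" and "|c ` V| \<le>o \<kappa>"
    and "\<forall>c :: 'v \<Rightarrow> 'v. proper_colouring V E c \<longrightarrow> \<kappa> \<le>o |c ` V|"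
  shows "chromatic_number_is V E \<kappa>"
  using assms ordIso_iff_ordLeq unfolding chromatic_number_is_def by blast

theorem corollary1p6:
  fixes k :: nat and \<kappa> :: "'a rel"
  assumes "2 \<le> k"
    and "Card_order \<kappa>"
    and "\<kappa> \<le>o card_of (UNIV :: real set)"
    and "continuum_le_succ_iter \<kappa> (k - 2)"
  shows "\<exists>d (P :: real list set). 1 \<le> d \<and> template d k P \<and>
           chromatic_number_is (Rd d) (L_edges d P) \<kappa>"
proof -
  obtain m B where m: "m \<le> k - 2" and B: "succ_iter_real \<kappa> m B"
    and continuum_le: "|UNIV :: real set| \<le>o |B|"
    using assms(4) unfolding continuum_le_succ_iter_def by blast
  have \<kappa>_inf: "\<not> finite (Field \<kappa>)"
    using succ_iter_real_finite[OF assms(2) _ B] card_of_ordLeq_finite[OF continuum_le]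
    by (auto simp: infinite_UNIV_char_0)
  define P where "P = cross_template (Suc m) (k - 2 - m)"
  have "template (Suc m) (k - 2 - m + Suc m + 1) P"
    unfolding P_def by (rule template_cross_template) simp
  moreover have "k - 2 - m + Suc m + 1 = k" using m assms(1) by simp
  ultimately have template: "template (Suc m) k P" by (simp only:)
  obtain G where "kuratowski_cover \<kappa> (UNIV :: real set) m G"
    using kuratowski_cover_exists[OF assms(2) \<kappa>_inf B continuum_le] by blast
  then obtain c :: "real list \<Rightarrow> real list"
    where "proper_colouring (Rd (Suc m)) (L_edges (Suc m) P) c" "|c ` Rd (Suc m)| \<le>o \<kappa>"
    using kuratowski_cover_separating_colouring[OF assms(2)]
      separating_colouring_proper[OF assms(2) \<kappa>_inf assms(3)]
    unfolding P_def Rd_eq_tuples by metis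
  moreover have "\<forall>c :: real list \<Rightarrow> real list.
      proper_colouring (Rd (Suc m)) (L_edges (Suc m) P) c \<longrightarrow> \<kappa> \<le>o |c ` Rd (Suc m)|"
    using proper_colouring_ordLeq_card_of_image[OF assms(2) \<kappa>_inf B] unfolding P_def by blast
  ultimately have "chromatic_number_is (Rd (Suc m)) (L_edges (Suc m) P) \<kappa>"
    by (rule chromatic_number_isI)
  then show ?thesis using template by (intro exI[of _ "Suc m"] exI[of _ P]) simp
qed

end
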